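(* Let $S$ be a finite set of possibly partial distributions all with total mass $\textsc{Mass}(S)$. Then $$\int_0^{\textsc{Mass}(S)}\log_2\!\left(\frac{1}{\textsc{Profile}_S(x)}\right)dx=\int_0^1\frac{\textsc{Inv-Prof}_S(y)}{y\ln 2}\,dy.$$
   Context: A possibly partial distribution $p$ is a finite vector of nonnegative reals sorted non-increasingly with total mass $\textsc{Mass}(p)\le 1$. $\textsc{Sketch}_p(x)=p(i)$ for $x\in(\sum_{j>i}p(j),\sum_{j\ge i}p(j)]$, and $\textsc{Profile}_S(x)=\min_{p\in S}\textsc{Sketch}_p(x)$ for $x\in(0,\textsc{Mass}(S)]$. The inverse sketch is $\textsc{Inv-Sketch}_p(y)=\sum_j p(j)\,[p(j)\le y]$ for $y\in[0,1]$, and the inverse profile is $\textsc{Inv-Prof}_S(y)=\max_{p\in S}\textsc{Inv-Sketch}_p(y)$. *)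

theory Defs
  imports "HOL-Analysis.Analysis"
begin

definition mass :: "real list \<Rightarrow> real" where
  "mass p = sum_list p"

definition is_pdist :: "real list \<Rightarrow> bool" where
  "is_pdist p \<longleftrightarrow> (\<forall>v\<in>set p. 0 \<le> v) \<and> sorted_wrt (\<ge>) p \<and> mass p \<le> 1"

definition tail_gt :: "real list \<Rightarrow> nat \<Rightarrow> real" where
  "tail_gt p i = (\<Sum>j\<in>{i<..<length p}. p ! j)"

definition tail_ge :: "real list \<Rightarrow> nat \<Rightarrow> real" where
  "tail_ge p i = (\<Sum>j\<in>{i..<length p}. p ! j)"

definition sketch :: "real list \<Rightarrow> real \<Rightarrow> real" where
  "sketch p x = (THE v. \<exists>i<length p. tail_gt p i < x \<and> x \<le> tail_ge p i \<and> v = p ! i)"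

definition profile :: "real list set \<Rightarrow> real \<Rightarrow> real" where
  "profile S x = Min ((\<lambda>p. sketch p x) ` S)"

definition inv_sketch :: "real list \<Rightarrow> real \<Rightarrow> real" where
  "inv_sketch p y = (\<Sum>j<length p. if p ! j \<le> y then p ! j else 0)"

definition inv_prof :: "real list set \<Rightarrow> real \<Rightarrow> real" where
  "inv_prof S y = Max ((\<lambda>p. inv_sketch p y) ` S)"

end

theory Submission
  imports Defs
begin

text \<open>Both sides are the measure of \<open>{(x, y). 0 < x \<le> M, Profile(x) \<le> y \<le> 1}\<close>
  with density \<open>1 / (y ln 2)\<close>, computed by Tonelli in the two orders: the section at \<open>x\<close>
  is \<open>[Profile(x), 1]\<close>, of weight \<open>log\<^sub>2 (1 / Profile(x))\<close>, and because
  \<open>Profile(x) \<le> y \<longleftrightarrow> x \<le> Inv-Prof(y)\<close> the section at \<open>y\<close> is \<open>(0, Inv-Prof(y)]\<close>.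
  This equivalence is first shown for one distribution: if \<open>x\<close> lies in the block
  \<open>(\<Sum>j>i. p(j), \<Sum>j\<ge>i. p(j)]\<close> of \<open>p(i)\<close>, then \<open>Inv-Sketch(y)\<close> is at least the upper
  end of the block when \<open>p(i) \<le> y\<close> (all later entries are \<open>\<le> y\<close> by sortedness) and at
  most its lower end otherwise.
  It then survives taking the minimum over \<open>S\<close> on the left and the maximum on the right.
  Integrability comes from \<open>Profile\<close> being bounded below by the least positive entry.\<close>

lemma has_integral_inverse_ln2:
  assumes "0 < a" "a \<le> 1"
  shows "((\<lambda>y. 1 / (y * ln 2)) has_integral log 2 (1 / a)) {a..1}"
proof -
  have "((\<lambda>y. 1 / (y * ln 2)) has_integral (ln 1 / ln 2 - ln a / ln 2)) {a..1}"
  proof (rule fundamental_theorem_of_calculus[OF \<open>a \<le> 1\<close>])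
    fix y assume "y \<in> {a..1}"
    then have "0 < y" using \<open>0 < a\<close> by auto
    then show "((\<lambda>y. ln y / ln 2) has_vector_derivative 1 / (y * ln 2)) (at y within {a..1})"
      by (auto intro!: derivative_eq_intros
          simp: has_real_derivative_iff_has_vector_derivative[symmetric])
  qed
  then show ?thesis
    using \<open>0 < a\<close> by (simp add: log_def ln_div)
qed

lemma has_integral_marginals:
  fixes K :: "'a::euclidean_space \<Rightarrow> 'b::euclidean_space \<Rightarrow> ennreal"
    and L :: "'a \<Rightarrow> real" and R :: "'b \<Rightarrow> real"
  assumes K: "case_prod K \<in> borel_measurable (lborel \<Otimes>\<^sub>M lborel)"
    and L: "\<And>x. (\<integral>\<^sup>+ y. K x y \<partial>lborel) = ennreal (L x)" "\<And>x. 0 \<le> L x"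
    and R: "\<And>y. (\<integral>\<^sup>+ x. K x y \<partial>lborel) = ennreal (R y)" "\<And>y. 0 \<le> R y"
    and finite: "(\<integral>\<^sup>+ x. ennreal (L x) \<partial>lborel) < top"
  shows "\<exists>r. (L has_integral r) UNIV \<and> (R has_integral r) UNIV"
proof -
  have "L = (\<lambda>x. enn2real (\<integral>\<^sup>+ y. K x y \<partial>lborel))"
    using L by simp
  also have "\<dots> \<in> borel_measurable borel"
    using K by measurable
  finally have L_meas: "L \<in> borel_measurable borel" .
  have K_swap: "(\<lambda>(y, x). K x y) \<in> borel_measurable (lborel \<Otimes>\<^sub>M lborel)"
    using measurable_pair_swap[OF K] by (simp add: split_beta')
  have "R = (\<lambda>y. enn2real (\<integral>\<^sup>+ x. K x y \<partial>lborel))"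
    using R by simp
  also have "\<dots> \<in> borel_measurable borel"
    using K_swap by measurable
  finally have R_meas: "R \<in> borel_measurable borel" .
  obtain r where r: "0 \<le> r" "(\<integral>\<^sup>+ x. ennreal (L x) \<partial>lborel) = ennreal r"
    using less_top_ennreal[THEN iffD1, OF finite] by blast
  have "(L has_integral r) UNIV"
    by (rule nn_integral_has_integral[OF L_meas L(2) r(2) r(1)])
  moreover have "(\<integral>\<^sup>+ y. ennreal (R y) \<partial>lborel) = ennreal r"
    using lborel_pair.Fubini'[OF K] L(1) R(1) r(2) by simp
  then have "(R has_integral r) UNIV"
    by (rule nn_integral_has_integral[OF R_meas R(2) _ r(1)])
  ultimately show ?thesis
    by blast
qed

lemma mono_upper_adjoint:
  fixes f h :: "real \<Rightarrow> real"
  assumes galois: "\<And>x y. x \<in> {0<..M} \<Longrightarrow> f x \<le> y \<longleftrightarrow> x \<le> h y"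
    and h_bounds: "\<And>y. 0 \<le> h y \<and> h y \<le> M"
  shows "mono h"
proof
  fix y y' :: real assume "y \<le> y'"
  show "h y \<le> h y'"
  proof (cases "h y = 0")
    case True
    then show ?thesis using h_bounds[of y'] by simp
  next
    case False
    then have hy: "h y \<in> {0<..M}" using h_bounds[of y] by auto
    then have "f (h y) \<le> y'"
      using galois[OF hy, of y] \<open>y \<le> y'\<close> by simp
    then show ?thesis
      using galois[OF hy, of y'] by simp
  qed
qed

lemma nn_integral_log2_inverse_less_top:
  fixes f :: "real \<Rightarrow> real"
  assumes "0 \<le> M" "0 < c"
    and f_bounds: "\<And>x. x \<in> {0<..M} \<Longrightarrow> c \<le> f x"
  shows "(\<integral>\<^sup>+ x. ennreal (if x \<in> {0<..M} then log 2 (1 / f x) else 0) \<partial>lborel) < top"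
proof -
  have "(\<integral>\<^sup>+ x. ennreal (if x \<in> {0<..M} then log 2 (1 / f x) else 0) \<partial>lborel)
      \<le> (\<integral>\<^sup>+ x. ennreal (log 2 (1 / c)) * indicator {0<..M} x \<partial>lborel)"
  proof (rule nn_integral_mono)
    fix x
    show "ennreal (if x \<in> {0<..M} then log 2 (1 / f x) else 0)
        \<le> ennreal (log 2 (1 / c)) * indicator {0<..M} x"
    proof (cases "x \<in> {0<..M}")
      case True
      then have "log 2 (1 / f x) \<le> log 2 (1 / c)"
        using f_bounds[OF True] \<open>0 < c\<close> by (simp add: log_divide)
      then show ?thesis
        using True by (simp add: ennreal_leI)
    qed auto
  qed
  also have "\<dots> < top"
    using \<open>0 \<le> M\<close> by (simp add: nn_integral_cmult_indicator ennreal_mult_less_top)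
  finally show ?thesis .
qed

lemma layer_cake_log2_UNIV:
  fixes f h :: "real \<Rightarrow> real"
  assumes f_bounds: "\<And>x. x \<in> {0<..M} \<Longrightarrow> 0 < f x \<and> f x \<le> 1"
    and galois: "\<And>x y. x \<in> {0<..M} \<Longrightarrow> f x \<le> y \<longleftrightarrow> x \<le> h y"
    and h_bounds: "\<And>y. 0 \<le> h y \<and> h y \<le> M"
    and finite: "(\<integral>\<^sup>+ x. ennreal (if x \<in> {0<..M} then log 2 (1 / f x) else 0) \<partial>lborel) < top"
  shows "\<exists>r. ((\<lambda>x. if x \<in> {0<..M} then log 2 (1 / f x) else 0) has_integral r) UNIV
            \<and> ((\<lambda>y. if y \<in> {0..1} then h y / (y * ln 2) else 0) has_integral r) UNIV"
proof -
  have [measurable]: "h \<in> borel_measurable borel"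
    using borel_measurable_mono mono_upper_adjoint[OF galois h_bounds] by blast
  define K where "K x y = ennreal (if x \<in> {0<..M} \<and> y \<in> {0<..1} \<and> x \<le> h y
    then 1 / (y * ln 2) else 0)" for x y
  show ?thesis
  proof (rule has_integral_marginals[OF _ _ _ _ _ finite])
    show "case_prod K \<in> borel_measurable (lborel \<Otimes>\<^sub>M lborel)"
      unfolding K_def split_beta' by measurable
    show "(\<integral>\<^sup>+ y. K x y \<partial>lborel) = ennreal (if x \<in> {0<..M} then log 2 (1 / f x) else 0)" for x
    proof (cases "x \<in> {0<..M}")
      case True
      then have "K x y = ennreal (indicator {f x..1} y * (1 / (y * ln 2)))" for y
        using galois[OF True, of y] f_bounds[OF True] by (auto simp: K_def indicator_def)
      then have "(\<integral>\<^sup>+ y. K x y \<partial>lborel)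
          = (\<integral>\<^sup>+ y. ennreal (indicator {f x..1} y * (1 / (y * ln 2))) \<partial>lborel)"
        by simp
      also have "\<dots> = ennreal (log 2 (1 / f x))"
        using f_bounds[OF True]
        by (intro nn_integral_has_integral_lebesgue has_integral_inverse_ln2) auto
      finally show ?thesis
        using True by simp
    next
      case False
      then have "K x y = 0" for y
        by (auto simp: K_def)
      then show ?thesis
        using False by auto
    qed
    show "(\<integral>\<^sup>+ x. K x y \<partial>lborel) = ennreal (if y \<in> {0..1} then h y / (y * ln 2) else 0)" for y
    proof (cases "y \<in> {0<..1}")
      case True
      then have "K x y = ennreal (1 / (y * ln 2)) * indicator {0<..h y} x" for x
        using h_bounds[of y] by (auto simp: K_def indicator_def)
      then show ?thesis
        using True h_bounds[of y] by (simp add: nn_integral_cmult_indicator ennreal_mult[symmetric])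
    qed (auto simp: K_def)
    show "0 \<le> (if x \<in> {0<..M} then log 2 (1 / f x) else 0)" for x
      using f_bounds[of x] by (simp add: log_divide)
    show "0 \<le> (if y \<in> {0..1} then h y / (y * ln 2) else 0)" for y
      using h_bounds[of y] by simp
  qed
qed

lemma layer_cake_log2:
  fixes f h :: "real \<Rightarrow> real"
  assumes "0 \<le> M" "0 < c"
    and f_bounds: "\<And>x. x \<in> {0<..M} \<Longrightarrow> c \<le> f x \<and> f x \<le> 1"
    and galois: "\<And>x y. x \<in> {0<..M} \<Longrightarrow> f x \<le> y \<longleftrightarrow> x \<le> h y"
    and h_bounds: "\<And>y. 0 \<le> h y \<and> h y \<le> M"
  shows "\<exists>r. ((\<lambda>x. log 2 (1 / f x)) has_integral r) {0..M}
            \<and> ((\<lambda>y. h y / (y * ln 2)) has_integral r) {0..1}"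
proof -
  have "\<And>x. x \<in> {0<..M} \<Longrightarrow> 0 < f x \<and> f x \<le> 1"
    using f_bounds \<open>0 < c\<close> by fastforce
  from layer_cake_log2_UNIV[OF this galois h_bounds nn_integral_log2_inverse_less_top]
  obtain r where
    L: "((\<lambda>x. if x \<in> {0<..M} then log 2 (1 / f x) else 0) has_integral r) UNIV" and
    R: "((\<lambda>y. if y \<in> {0..1} then h y / (y * ln 2) else 0) has_integral r) UNIV"
    using assms by blast
  have "((\<lambda>x. if x \<in> {0..M} then log 2 (1 / f x) else 0) has_integral r) UNIV"
    using L by (rule has_integral_spike[OF negligible_sing[of 0], rotated]) auto
  then show ?thesis
    using R unfolding has_integral_restrict_UNIV by blast
qed

lemma is_pdist_nth_nonneg: "is_pdist p \<Longrightarrow> j < length p \<Longrightarrow> 0 \<le> p ! j"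
  unfolding is_pdist_def by auto

lemma is_pdist_nth_antimono:
  "is_pdist p \<Longrightarrow> i \<le> j \<Longrightarrow> j < length p \<Longrightarrow> p ! j \<le> p ! i"
  unfolding is_pdist_def by (metis order.refl le_neq_implies_less sorted_wrt_nth_less)

lemma tail_gt_eq_tail_ge_Suc: "tail_gt p i = tail_ge p (Suc i)"
  unfolding tail_gt_def tail_ge_def
  by (simp add: greaterThanLessThan_eq atLeastSucLessThan_greaterThanLessThan)

lemma tail_ge_eq_nth_plus_tail_gt: "i < length p \<Longrightarrow> tail_ge p i = p ! i + tail_gt p i"
  unfolding tail_gt_def tail_ge_def
  by (simp add: sum.atLeast_Suc_lessThan atLeastSucLessThan_greaterThanLessThan)

lemma tail_ge_0_eq_mass: "tail_ge p 0 = mass p"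
  unfolding tail_ge_def mass_def by (simp add: sum_list_sum_nth atLeast0LessThan)

lemma tail_ge_length: "tail_ge p (length p) = 0"
  unfolding tail_ge_def by simp

lemma tail_ge_nonneg: "is_pdist p \<Longrightarrow> 0 \<le> tail_ge p i"
  unfolding tail_ge_def by (auto intro!: sum_nonneg is_pdist_nth_nonneg)

lemma tail_ge_antimono: "is_pdist p \<Longrightarrow> i \<le> j \<Longrightarrow> tail_ge p j \<le> tail_ge p i"
  unfolding tail_ge_def by (rule sum_mono2) (auto intro: is_pdist_nth_nonneg)

lemma mass_nonneg: "is_pdist p \<Longrightarrow> 0 \<le> mass p"
  using tail_ge_nonneg[of p 0] by (simp add: tail_ge_0_eq_mass)

lemma tail_interval_unique:
  assumes p: "is_pdist p"
    and i: "tail_gt p i < x" "x \<le> tail_ge p i"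
    and j: "tail_gt p j < x" "x \<le> tail_ge p j"
  shows "i = j"
proof -
  have False if "tail_gt p k < x" "x \<le> tail_ge p l" "k < l" for k l
    using tail_ge_antimono[OF p, of "Suc k" l] that by (simp add: tail_gt_eq_tail_ge_Suc)
  then show ?thesis
    using i j by (metis linorder_neqE_nat)
qed

lemma tail_interval_exists:
  assumes p: "is_pdist p" and x: "0 < x" "x \<le> mass p"
  obtains i where "i < length p" "tail_gt p i < x" "x \<le> tail_ge p i"
proof -
  define A where "A = {i. i < length p \<and> x \<le> tail_ge p i}"
  have "finite A"
    unfolding A_def by auto
  have "0 \<in> A"
    using x by (cases p) (auto simp: A_def tail_ge_0_eq_mass mass_def)
  have i: "Max A \<in> A" "Suc (Max A) \<notin> A"
    using Max_in[OF \<open>finite A\<close>] \<open>0 \<in> A\<close> Max_ge[OF \<open>finite A\<close>, of "Suc (Max A)"]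
    by auto
  have "tail_gt p (Max A) < x"
  proof (cases "Suc (Max A) = length p")
    case True
    then show ?thesis using x by (simp add: tail_gt_eq_tail_ge_Suc tail_ge_length)
  next
    case False
    then show ?thesis using i by (auto simp: A_def tail_gt_eq_tail_ge_Suc)
  qed
  then show ?thesis using that i(1) by (auto simp: A_def)
qed

lemma sketch_eq_nth:
  assumes p: "is_pdist p"
    and i: "i < length p" "tail_gt p i < x" "x \<le> tail_ge p i"
  shows "sketch p x = p ! i"
  unfolding sketch_def
proof (rule the_equality)
  show "\<exists>j<length p. tail_gt p j < x \<and> x \<le> tail_ge p j \<and> p ! i = p ! j"
    using i by blast
qed (use tail_interval_unique[OF p i(2,3)] in blast)

lemma tail_ge_le_inv_sketch:
  assumes p: "is_pdist p" and "p ! i \<le> y"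
  shows "tail_ge p i \<le> inv_sketch p y"
proof -
  have "tail_ge p i = (\<Sum>j<length p. if i \<le> j then p ! j else 0)"
    unfolding tail_ge_def by (subst sum.inter_filter[symmetric]) (auto intro!: sum.cong)
  also have "\<dots> \<le> inv_sketch p y"
    unfolding inv_sketch_def
    using is_pdist_nth_antimono[OF p, of i] is_pdist_nth_nonneg[OF p] \<open>p ! i \<le> y\<close>
    by (intro sum_mono) force
  finally show ?thesis .
qed

lemma inv_sketch_le_tail_gt:
  assumes p: "is_pdist p" and "y < p ! i" "i < length p"
  shows "inv_sketch p y \<le> tail_gt p i"
proof -
  have "inv_sketch p y \<le> (\<Sum>j<length p. if i < j then p ! j else 0)"
    unfolding inv_sketch_def
  proof (rule sum_mono)
    fix j assume "j \<in> {..<length p}"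
    then show "(if p ! j \<le> y then p ! j else 0) \<le> (if i < j then p ! j else 0)"
      using is_pdist_nth_antimono[OF p, of j i] is_pdist_nth_nonneg[OF p, of j] assms(2,3)
      by (cases "i < j") auto
  qed
  also have "\<dots> = tail_gt p i"
    unfolding tail_gt_def by (subst sum.inter_filter[symmetric]) (auto intro!: sum.cong)
  finally show ?thesis .
qed

lemma inv_sketch_nonneg: "is_pdist p \<Longrightarrow> 0 \<le> inv_sketch p y"
  unfolding inv_sketch_def by (auto intro!: sum_nonneg is_pdist_nth_nonneg)

lemma inv_sketch_le_mass: "is_pdist p \<Longrightarrow> inv_sketch p y \<le> mass p"
  unfolding inv_sketch_def mass_def sum_list_sum_nth atLeast0LessThan
  by (rule sum_mono) (auto intro: is_pdist_nth_nonneg)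

lemma
  assumes p: "is_pdist p" and x: "0 < x" "x \<le> mass p"
  shows sketch_pos: "0 < sketch p x"
    and sketch_le_1: "sketch p x \<le> 1"
    and sketch_in_set: "sketch p x \<in> set p"
    and sketch_le_iff: "sketch p x \<le> y \<longleftrightarrow> x \<le> inv_sketch p y"
proof -
  obtain i where i: "i < length p" "tail_gt p i < x" "x \<le> tail_ge p i"
    using tail_interval_exists[OF p x] .
  have split: "tail_ge p i = p ! i + tail_gt p i"
    using tail_ge_eq_nth_plus_tail_gt[OF i(1)] .
  have sketch: "sketch p x = p ! i"
    using sketch_eq_nth[OF p i] .
  show "0 < sketch p x"
    using i split sketch by simp
  have "p ! i \<le> tail_ge p i"
    using split tail_ge_nonneg[OF p, of "Suc i"] by (simp add: tail_gt_eq_tail_ge_Suc)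
  also have "\<dots> \<le> mass p"
    using tail_ge_antimono[OF p, of 0 i] by (simp add: tail_ge_0_eq_mass)
  finally show "sketch p x \<le> 1"
    using p sketch by (simp add: is_pdist_def)
  show "sketch p x \<in> set p"
    using i sketch by simp
  show "sketch p x \<le> y \<longleftrightarrow> x \<le> inv_sketch p y"
    using tail_ge_le_inv_sketch[OF p, of i y] inv_sketch_le_tail_gt[OF p, of y i] i sketch
    by (metis linorder_not_le order_trans dual_order.strict_trans1)
qed

context
  fixes S :: "real list set" and M :: real
  assumes finite: "finite S" and nonempty: "S \<noteq> {}"
    and pdist: "\<And>p. p \<in> S \<Longrightarrow> is_pdist p"
    and mass: "\<And>p. p \<in> S \<Longrightarrow> mass p = M"
begin

lemma profile_le_iff:
  assumes "x \<in> {0<..M}"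
  shows "profile S x \<le> y \<longleftrightarrow> x \<le> inv_prof S y"
proof -
  have "profile S x \<le> y \<longleftrightarrow> (\<exists>p\<in>S. sketch p x \<le> y)"
    unfolding profile_def using finite nonempty by (subst Min_le_iff) auto
  also have "\<dots> \<longleftrightarrow> (\<exists>p\<in>S. x \<le> inv_sketch p y)"
    using sketch_le_iff[OF pdist] mass assms by auto
  also have "\<dots> \<longleftrightarrow> x \<le> inv_prof S y"
    unfolding inv_prof_def using finite nonempty by (subst Max_ge_iff) auto
  finally show ?thesis .
qed

lemma profile_bounds:
  obtains c where "0 < c" "\<And>x. x \<in> {0<..M} \<Longrightarrow> c \<le> profile S x \<and> profile S x \<le> 1"
proof
  define V where "V = insert 1 {v \<in> \<Union>(set ` S). 0 < v}"
  have "finite V"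
    using finite unfolding V_def by auto
  then show "0 < Min V"
    by (subst Min_gr_iff) (auto simp: V_def)
  fix x assume x: "x \<in> {0<..M}"
  have "profile S x \<in> (\<lambda>p. sketch p x) ` S"
    unfolding profile_def using finite nonempty by (intro Min_in) auto
  then obtain p where p: "p \<in> S" "profile S x = sketch p x"
    by auto
  have x_le_mass: "0 < x" "x \<le> mass p"
    using x mass[OF p(1)] by auto
  have "profile S x \<in> V"
    using sketch_pos[OF pdist x_le_mass] sketch_in_set[OF pdist x_le_mass] p
    by (auto simp: V_def)
  then show "Min V \<le> profile S x \<and> profile S x \<le> 1"
    using \<open>finite V\<close> p sketch_le_1[OF pdist x_le_mass] by auto
qed

lemma inv_prof_bounds: "0 \<le> inv_prof S y \<and> inv_prof S y \<le> M"
proof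
  obtain p where "p \<in> S"
    using nonempty by blast
  then show "0 \<le> inv_prof S y"
    unfolding inv_prof_def using finite inv_sketch_nonneg[OF pdist]
    by (subst Max_ge_iff) auto
  show "inv_prof S y \<le> M"
    unfolding inv_prof_def using finite nonempty inv_sketch_le_mass[OF pdist] mass
    by (subst Max_le_iff) auto
qed

end

theorem lemma3:
  fixes S :: "real list set" and M :: real
  assumes "finite S" and "S \<noteq> {}"
    and "\<forall>p\<in>S. is_pdist p"
    and "\<forall>p\<in>S. mass p = M"
  shows "(\<lambda>x. log 2 (1 / profile S x)) integrable_on {0..M}
    \<and> (\<lambda>y. inv_prof S y / (y * ln 2)) integrable_on {0..1}
    \<and> integral {0..M} (\<lambda>x. log 2 (1 / profile S x))
      = integral {0..1} (\<lambda>y. inv_prof S y / (y * ln 2))"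
proof -
  note setting = assms(1,2) assms(3,4)[rule_format]
  obtain p where "p \<in> S"
    using assms(2) by blast
  then have "0 \<le> M"
    using mass_nonneg setting(3,4) by metis
  obtain c where "0 < c" "\<And>x. x \<in> {0<..M} \<Longrightarrow> c \<le> profile S x \<and> profile S x \<le> 1"
    using profile_bounds[OF setting] by blast
  from layer_cake_log2[OF \<open>0 \<le> M\<close> this profile_le_iff[OF setting] inv_prof_bounds[OF setting]]
  show ?thesis
    by (auto simp: integral_unique)
qed

end
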